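(* Let $\alpha\in(1,2)$ be irrational. Then $\alpha$ has a purely periodic Lehner expansion if and only if $\alpha$ is a quadratic irrational whose Galois conjugate $\bar\alpha$ satisfies $\bar\alpha<1$. Furthermore, if $\alpha=[\![\overline{(a_0,\epsilon_0)(a_1,\epsilon_1)\cdots(a_{r-1},\epsilon_{r-1})}]\!]$, then $\bar\alpha=-\langle\!\langle\overline{(\epsilon_{r-1}/a_{r-1})\cdots(\epsilon_0/a_0)}\rangle\!\rangle$.
   Context: The Lehner map on $[1,2)$ is $L(x)=\frac{1}{2-x}$ for $x\in[1,3/2)$ and $L(x)=\frac{1}{x-1}$ for $x\in[3/2,2)$. For irrational $x\in(1,2)$, its Lehner digits are $(a_i,\epsilon_i)=(2,-1)$ if $L^i(x)\in[1,3/2)$ and $(a_i,\epsilon_i)=(1,+1)$ if $L^i(x)\in[3/2,2)$, and $x=a_0+\cfrac{\epsilon_0}{a_1+\cfrac{\epsilon_1}{a_2+\cdots}}$, written $[\![(a_0,\epsilon_0)(a_1,\epsilon_1)\cdots]\!]$ (the Lehner expansion). For digits $(f_i/b_i)\in\{(-1/2),(+1/1)\}$, $\langle\!\langle(f_0/b_0)(f_1/b_1)\cdots\rangle\!\rangle$ denotes the value of $\cfrac{f_0}{b_0+\cfrac{f_1}{b_1+\cdots}}$; a Lehner digit $(a,\epsilon)$ corresponds to the Farey-type digit $(\epsilon/a)$. An overline denotes infinite periodic repetition of the block; "purely periodic" means the digit sequence is periodic from index $0$. *)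

theory Defs
  imports Complex_Main
begin

definition lehner_map :: "real \<Rightarrow> real" where
  "lehner_map x = (if x < 3/2 then 1 / (2 - x) else 1 / (x - 1))"

text \<open>The i-th Lehner digit (a_i, epsilon_i) of x.\<close>
definition lehner_digit :: "real \<Rightarrow> nat \<Rightarrow> int \<times> int" where
  "lehner_digit x i = (if (lehner_map ^^ i) x < 3/2 then (2, -1) else (1, 1))"

definition lehner_purely_periodic :: "real \<Rightarrow> bool" where
  "lehner_purely_periodic x \<longleftrightarrow>
     (\<exists>r>0. \<forall>i. lehner_digit x (i + r) = lehner_digit x i)"

fun farey_cf_fin :: "(int \<times> int) list \<Rightarrow> real" where
  "farey_cf_fin [] = 0"
| "farey_cf_fin ((f, b) # ds) = of_int f / (of_int b + farey_cf_fin ds)"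

definition farey_cf_has_value :: "(nat \<Rightarrow> int \<times> int) \<Rightarrow> real \<Rightarrow> bool" where
  "farey_cf_has_value d v \<longleftrightarrow> (\<lambda>n. farey_cf_fin (map d [0..<n])) \<longlonglongrightarrow> v"

definition quadratic_irrational :: "real \<Rightarrow> bool" where
  "quadratic_irrational x \<longleftrightarrow> x \<notin> \<rat> \<and>
     (\<exists>a b c :: int. a \<noteq> 0 \<and> of_int a * x^2 + of_int b * x + of_int c = 0)"

text \<open>Galois conjugate of a quadratic irrational: the other root of its (essentially
  unique) integer quadratic polynomial.\<close>
definition galois_conj :: "real \<Rightarrow> real" where
  "galois_conj x = (THE y. \<exists>a b c :: int. a \<noteq> 0 \<and>
       of_int a * x^2 + of_int b * x + of_int c = 0 \<and> y = - of_int b / of_int a - x)"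

end

theory Submission
  imports Defs "HOL-Library.Quadratic_Discriminant"
begin

text \<open>If the digits of \<open>\<alpha>\<close> are periodic, the orbit of \<open>\<alpha>\<close> under the Lehner map returns
  to \<open>\<alpha>\<close>, because the map is expanding on each branch and so distinct points eventually
  get different digits. Then \<open>\<alpha>\<close> is a fixed point of the integer Moebius map of one
  period, and since that map has determinant \<open>\<plusminus>1\<close> its other fixed point, the conjugate
  \<open>\<alpha>'\<close>, lies below \<open>1\<close>.
  Conversely, the Lehner map preserves the discriminant and the condition \<open>\<alpha>' < 1\<close>, is
  injective on such reduced numbers, and only finitely many reduced numbers share a
  discriminant; hence the orbit is periodic.
  Finally, the negated conjugates along the orbit obey the Farey recursion with the digits
  read backwards. Each period contains a digit \<open>(1, 1)\<close>, so the denominators of the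
  reversed expansion grow without bound and its truncations converge to \<open>-\<alpha>'\<close>.\<close>

section \<open>Farey maps and their matrices\<close>

definition is_farey_digit :: "int \<times> int \<Rightarrow> bool" where
  "is_farey_digit d \<longleftrightarrow> d = (1, 1) \<or> d = (-1, 2)"

definition farey_map :: "int \<times> int \<Rightarrow> real \<Rightarrow> real" where
  "farey_map d z = of_int (fst d) / (of_int (snd d) + z)"

fun farey_comp :: "(int \<times> int) list \<Rightarrow> real \<Rightarrow> real" where
  "farey_comp [] z = z"
| "farey_comp (d # ds) z = farey_map d (farey_comp ds z)"

lemma farey_cf_fin_eq_farey_comp: "farey_cf_fin ds = farey_comp ds 0"
  by (induction ds rule: farey_cf_fin.induct) (auto simp: farey_map_def)

lemma farey_comp_append: "farey_comp (xs @ ys) z = farey_comp xs (farey_comp ys z)"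
  by (induction xs) auto

lemma farey_map_gt_minus_one:
  assumes "is_farey_digit d" "z > -1"
  shows "farey_map d z > -1"
  using assms by (auto simp: is_farey_digit_def farey_map_def field_simps)

text \<open>A quadruple \<open>(A, B, C, D)\<close> stands for the integer matrix \<open>[[A, B], [C, D]]\<close>
  acting by \<open>z \<mapsto> (A z + B) / (C z + D)\<close>; appending the digit \<open>(f, b)\<close> multiplies
  on the right by \<open>[[0, f], [1, b]]\<close>, the matrix of \<open>farey_map\<close>.\<close>

type_synonym mobius = "int \<times> int \<times> int \<times> int"

definition mobius_mult_digit :: "mobius \<Rightarrow> int \<times> int \<Rightarrow> mobius" where
  "mobius_mult_digit M d = (case M of (A, B, C, D) \<Rightarrow>
     (B, A * fst d + B * snd d, D, C * fst d + D * snd d))"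

definition farey_matrix :: "(int \<times> int) list \<Rightarrow> mobius" where
  "farey_matrix ds = foldl mobius_mult_digit (1, 0, 0, 1) ds"

lemma farey_matrix_Nil [simp]: "farey_matrix [] = (1, 0, 0, 1)"
  by (simp add: farey_matrix_def)

lemma farey_matrix_snoc [simp]: "farey_matrix (ds @ [d]) = mobius_mult_digit (farey_matrix ds) d"
  by (simp add: farey_matrix_def)

definition farey_matrix_bounds :: "mobius \<Rightarrow> bool" where
  "farey_matrix_bounds M \<longleftrightarrow> (case M of (A, B, C, D) \<Rightarrow>
     0 \<le> C \<and> C \<le> D \<and> 1 \<le> D \<and> 1 \<le> C + A \<and> C + A \<le> D + B \<and> \<bar>A * D - B * C\<bar> = 1)"

lemma farey_matrix_bounds_mult_digit:
  assumes "farey_matrix_bounds M" "is_farey_digit d"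
  shows "farey_matrix_bounds (mobius_mult_digit M d)"
proof -
  obtain A B C D where M: "M = (A, B, C, D)" by (cases M) auto
  have det: "B * (C * f + D * b) - (A * f + B * b) * D = - f * (A * D - B * C)" for f b :: int
    by (simp add: algebra_simps)
  show ?thesis
    using assms det[of "fst d" "snd d"]
    unfolding M farey_matrix_bounds_def mobius_mult_digit_def is_farey_digit_def
    by (auto simp: abs_mult)
qed

lemma farey_matrix_bounds:
  "\<forall>d\<in>set ds. is_farey_digit d \<Longrightarrow> farey_matrix_bounds (farey_matrix ds)"
proof (induction ds rule: rev_induct)
  case Nil
  then show ?case by (simp add: farey_matrix_bounds_def)
next
  case (snoc d ds)
  then show ?case by (simp add: farey_matrix_bounds_mult_digit)
qed

lemma farey_matrix_C_pos:
  assumes "ds \<noteq> []" "\<forall>d\<in>set ds. is_farey_digit d" "farey_matrix ds = (A, B, C, D)"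
  shows "C \<ge> 1"
proof -
  obtain ds' d where ds: "ds = ds' @ [d]" using assms(1) by (cases ds rule: rev_cases) auto
  have "farey_matrix_bounds (farey_matrix ds')" using assms(2) by (intro farey_matrix_bounds) (simp add: ds)
  then show ?thesis
    using assms(3) by (cases "farey_matrix ds'") (auto simp: ds farey_matrix_bounds_def mobius_mult_digit_def)
qed

lemma farey_comp_eq_mobius:
  assumes "\<forall>d\<in>set ds. is_farey_digit d" "z > -1" "farey_matrix ds = (A, B, C, D)"
  shows "of_int C * z + of_int D > 0 \<and>
    farey_comp ds z = (of_int A * z + of_int B) / (of_int C * z + of_int D)"
  using assms
proof (induction ds arbitrary: A B C D z rule: rev_induct)
  case Nil
  then show ?case by simp
next
  case (snoc d ds)
  obtain A0 B0 C0 D0 where M0: "farey_matrix ds = (A0, B0, C0, D0)" by (cases "farey_matrix ds") auto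
  obtain f b where d: "d = (f, b)" by (cases d) auto
  have digit: "is_farey_digit d" and digits: "\<forall>d\<in>set ds. is_farey_digit d" using snoc.prems by auto
  define z' where "z' = farey_map d z"
  have bz: "of_int b + z > 0" using digit snoc.prems(2) by (auto simp: d is_farey_digit_def)
  have IH: "of_int C0 * z' + of_int D0 > 0 \<and>
      farey_comp ds z' = (of_int A0 * z' + of_int B0) / (of_int C0 * z' + of_int D0)"
    using snoc.IH[OF digits _ M0] farey_map_gt_minus_one[OF digit snoc.prems(2)] by (simp add: z'_def)
  have new: "A = B0" "B = A0 * f + B0 * b" "C = D0" "D = C0 * f + D0 * b"
    using snoc.prems(3) M0 by (auto simp: d mobius_mult_digit_def)
  have z': "z' = of_int f / (of_int b + z)" by (simp add: z'_def farey_map_def d)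
  have den: "of_int C * z + of_int D = (of_int b + z) * (of_int C0 * z' + of_int D0)"
    and num: "of_int A * z + of_int B = (of_int b + z) * (of_int A0 * z' + of_int B0)"
    using bz by (simp_all add: new z' field_simps)
  have "farey_comp (ds @ [d]) z = farey_comp ds z'" by (simp add: farey_comp_append z'_def)
  then show ?case using IH bz by (simp add: den num)
qed

lemma farey_comp_dist_le:
  assumes "\<forall>d\<in>set ds. is_farey_digit d" "e > -1" "farey_matrix ds = (A, B, C, D)"
  shows "\<bar>farey_comp ds e - farey_comp ds 0\<bar> \<le> (\<bar>e\<bar> / min 1 (1 + e)) / of_int D"
proof -
  have "farey_matrix_bounds (A, B, C, D)" using farey_matrix_bounds[OF assms(1)] assms(3) by simp
  then have C0: "0 \<le> C" and CD: "C \<le> D" and D1: "1 \<le> D" and det: "\<bar>A * D - B * C\<bar> = 1"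
    by (auto simp: farey_matrix_bounds_def)
  have pos: "of_int C * e + of_int D > 0"
    and Ge: "farey_comp ds e = (of_int A * e + of_int B) / (of_int C * e + of_int D)"
    using farey_comp_eq_mobius[OF assms] by auto
  have G0: "farey_comp ds 0 = of_int B / of_int D"
    using farey_comp_eq_mobius[OF assms(1) _ assms(3), of 0] by simp
  have Dp: "(of_int D :: real) \<ge> 1" using D1 by simp
  have m0: "min 1 (1 + e) > 0" using assms(2) by simp
  have low: "min 1 (1 + e) * of_int D \<le> of_int C * e + of_int D"
  proof (cases "e \<ge> 0")
    case True
    then show ?thesis using C0 Dp mult_right_mono[of "min 1 (1 + e)" 1 "of_int D"] by simp
  next
    case False
    have "of_int D * e \<le> of_int C * e" using CD False by (intro mult_right_mono_neg) auto
    then show ?thesis using Dp mult_right_mono[of "min 1 (1 + e)" "1 + e" "of_int D"]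
      by (simp add: algebra_simps)
  qed
  have "farey_comp ds e - farey_comp ds 0
      = of_int (A * D - B * C) * e / ((of_int C * e + of_int D) * of_int D)"
    unfolding Ge G0 using pos Dp by (simp add: field_simps)
  moreover have "\<bar>of_int A * of_int D - of_int B * of_int C\<bar> = (1::real)"
    by (metis det of_int_1 of_int_abs of_int_diff of_int_mult)
  ultimately have "\<bar>farey_comp ds e - farey_comp ds 0\<bar> = \<bar>e\<bar> / ((of_int C * e + of_int D) * of_int D)"
    using pos Dp by (simp add: abs_mult)
  also have "\<dots> \<le> \<bar>e\<bar> / ((min 1 (1 + e) * of_int D) * of_int D)"
    using low m0 Dp pos by (intro divide_left_mono mult_right_mono mult_pos_pos) auto
  also have "\<dots> \<le> \<bar>e\<bar> / min 1 (1 + e) / of_int D"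
    using m0 Dp mult_left_mono[of 1 "of_int D" "\<bar>e\<bar>"] by (simp add: field_simps)
  finally show ?thesis .
qed

definition farey_denom :: "(nat \<Rightarrow> int \<times> int) \<Rightarrow> nat \<Rightarrow> int" where
  "farey_denom d n = snd (snd (snd (farey_matrix (map d [0..<n]))))"

lemma farey_denom_Suc_Suc:
  "farey_denom d (Suc (Suc n)) = fst (d (Suc n)) * farey_denom d n + snd (d (Suc n)) * farey_denom d (Suc n)"
proof -
  have "map d [0..<Suc (Suc n)] = (map d [0..<n] @ [d n]) @ [d (Suc n)]" by simp
  then show ?thesis
    by (cases "farey_matrix (map d [0..<n])")
      (simp only: farey_denom_def farey_matrix_snoc, simp add: mobius_mult_digit_def)
qed

lemma farey_denom_ge_1_and_mono_Suc:
  assumes "\<And>n. is_farey_digit (d n)"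
  shows "1 \<le> farey_denom d n \<and> farey_denom d n \<le> farey_denom d (Suc n)"
proof (induction n)
  case 0
  then show ?case
    using assms[of 0] by (auto simp: farey_denom_def farey_matrix_def mobius_mult_digit_def is_farey_digit_def)
next
  case (Suc n)
  then show ?case
    using assms[of "Suc n"] by (auto simp: farey_denom_Suc_Suc is_farey_digit_def)
qed

lemma farey_denom_tendsto_at_top:
  assumes digits: "\<And>n. is_farey_digit (d n)"
    and freq: "frequently (\<lambda>n. d n = (1, 1)) sequentially"
  shows "filterlim (\<lambda>n. real_of_int (farey_denom d n)) at_top sequentially"
proof -
  have ge_1: "1 \<le> farey_denom d n" and mono: "mono (farey_denom d)" for n
    using farey_denom_ge_1_and_mono_Suc[where d = d, OF digits] by (simp_all add: mono_iff_le_Suc)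
  have "\<exists>N. \<forall>n\<ge>N. int k \<le> farey_denom d n" for k
  proof (induction k)
    case 0
    then show ?case using order_trans[OF zero_le_one ge_1] by simp
  next
    case (Suc k)
    then obtain N where N: "\<forall>n\<ge>N. int k \<le> farey_denom d n" by blast
    obtain m where m: "Suc N \<le> m" "d m = (1, 1)" using freq by (auto simp: frequently_sequentially)
    then obtain n where n: "m = Suc n" "N \<le> n" by (cases m) auto
    have "int k \<le> farey_denom d n" using N n by simp
    then have "int (Suc k) \<le> farey_denom d (Suc (Suc n))"
      using n m ge_1[of "Suc n"] by (simp add: farey_denom_Suc_Suc)
    then show ?case using mono by (meson monoD order_trans)
  qed
  then have "\<exists>N. \<forall>n\<ge>N. real k \<le> real_of_int (farey_denom d n)" for k
    by (metis of_int_le_iff of_int_of_nat_eq)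
  then show ?thesis
    unfolding filterlim_at_top eventually_sequentially
    by (meson order_trans real_arch_simple)
qed

text \<open>The truncations differ from the value only by the tail \<open>t n\<close> substituted for \<open>0\<close>,
  which moves the result by at most a constant over the denominator.\<close>

lemma farey_cf_has_value_of_bounded_tails:
  assumes digits: "\<And>n. is_farey_digit (d n)"
    and freq: "frequently (\<lambda>n. d n = (1, 1)) sequentially"
    and tails_gt: "\<And>n. t n > -1"
    and tails_bounded: "\<And>n. \<bar>t n\<bar> / min 1 (1 + t n) \<le> K"
    and v_eq: "\<And>n. v = farey_comp (map d [0..<n]) (t n)"
  shows "farey_cf_has_value d v"
proof -
  have "((\<lambda>n. farey_cf_fin (map d [0..<n]) - v) \<longlongrightarrow> 0) sequentially"
  proof (rule tendsto_0_le)
    show "((\<lambda>n. inverse (real_of_int (farey_denom d n))) \<longlongrightarrow> 0) sequentially"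
      by (rule tendsto_inverse_0_at_top[OF farey_denom_tendsto_at_top[OF digits freq]])
    show "\<forall>\<^sub>F n in sequentially. norm (farey_cf_fin (map d [0..<n]) - v)
        \<le> norm (inverse (real_of_int (farey_denom d n))) * K"
    proof (intro always_eventually allI)
      fix n
      obtain A B C D where M: "farey_matrix (map d [0..<n]) = (A, B, C, D)"
        by (cases "farey_matrix (map d [0..<n])") auto
      have D: "farey_denom d n = D" by (simp add: farey_denom_def M)
      have D1: "(of_int D :: real) \<ge> 1"
        using farey_denom_ge_1_and_mono_Suc[where d = d, OF digits, of n] D by simp
      have "norm (farey_cf_fin (map d [0..<n]) - v)
          = \<bar>farey_comp (map d [0..<n]) (t n) - farey_comp (map d [0..<n]) 0\<bar>"
        using v_eq[of n] by (simp add: farey_cf_fin_eq_farey_comp abs_minus_commute)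
      also have "\<dots> \<le> (\<bar>t n\<bar> / min 1 (1 + t n)) / of_int D"
        using farey_comp_dist_le[OF _ tails_gt M] digits by auto
      also have "\<dots> \<le> K / of_int D"
        by (rule divide_right_mono[OF tails_bounded]) (use D1 in simp)
      finally show "norm (farey_cf_fin (map d [0..<n]) - v)
          \<le> norm (inverse (real_of_int (farey_denom d n))) * K"
        using D D1 by (simp add: field_simps)
    qed
  qed
  then show ?thesis unfolding farey_cf_has_value_def by (rule LIM_zero_cancel)
qed

section \<open>The Lehner orbit\<close>

definition lehner_first_digit :: "real \<Rightarrow> int \<times> int" where
  "lehner_first_digit x = (if x < 3/2 then (2, -1) else (1, 1))"

definition lehner_orbit :: "real \<Rightarrow> nat \<Rightarrow> real" where
  "lehner_orbit x n = (lehner_map ^^ n) x"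

definition lehner_farey_digit :: "real \<Rightarrow> nat \<Rightarrow> int \<times> int" where
  "lehner_farey_digit x i = (snd (lehner_digit x i), fst (lehner_digit x i))"

lemma lehner_orbit_0 [simp]: "lehner_orbit x 0 = x"
  by (simp add: lehner_orbit_def)

lemma lehner_orbit_Suc: "lehner_orbit x (Suc n) = lehner_map (lehner_orbit x n)"
  by (simp add: lehner_orbit_def)

lemma lehner_orbit_add: "lehner_orbit x (m + n) = lehner_orbit (lehner_orbit x m) n"
  by (simp add: lehner_orbit_def funpow_add add.commute[of m])

lemma lehner_digit_eq: "lehner_digit x i = lehner_first_digit (lehner_orbit x i)"
  by (simp add: lehner_digit_def lehner_first_digit_def lehner_orbit_def)

lemma lehner_digit_orbit: "lehner_digit (lehner_orbit x m) i = lehner_digit x (i + m)"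
  by (simp add: lehner_digit_eq lehner_orbit_add add.commute[of i m])

lemma is_farey_digit_lehner: "is_farey_digit (lehner_farey_digit x i)"
  by (simp add: is_farey_digit_def lehner_farey_digit_def lehner_digit_eq lehner_first_digit_def)

lemma lehner_map_eq:
  "lehner_map x = of_int (snd (lehner_first_digit x)) / (x - of_int (fst (lehner_first_digit x)))"
  by (auto simp: lehner_map_def lehner_first_digit_def field_simps)

lemma lehner_map_inverse:
  assumes "1 < x" "x < 2"
  shows "x = of_int (fst (lehner_first_digit x)) + of_int (snd (lehner_first_digit x)) / lehner_map x"
  using assms by (auto simp: lehner_map_def lehner_first_digit_def field_simps)

lemma divide_diff_of_int_notin_Rats:
  assumes "x \<notin> \<rat>" "e \<noteq> 0"
  shows "of_int e / (x - of_int a) \<notin> \<rat>"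
proof
  assume y: "of_int e / (x - of_int a) \<in> \<rat>"
  have "x - of_int a \<noteq> 0" using assms(1) by auto
  then have "x = of_int a + of_int e / (of_int e / (x - of_int a))" using assms(2) by simp
  also have "\<dots> \<in> \<rat>" using Rats_add[OF Rats_of_int Rats_divide[OF Rats_of_int y]] .
  finally show False using assms(1) by simp
qed

lemma lehner_map_range:
  assumes "1 < x" "x < 2" "x \<notin> \<rat>"
  shows "1 < lehner_map x \<and> lehner_map x < 2 \<and> lehner_map x \<notin> \<rat>"
proof -
  have "x \<noteq> 3/2" using assms(3) by (metis Rats_number_of Rats_divide)
  then have "1 < lehner_map x \<and> lehner_map x < 2"
    using assms(1,2) by (auto simp: lehner_map_def field_simps)
  moreover have "lehner_map x \<notin> \<rat>"
    unfolding lehner_map_eq using assms(3)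
    by (intro divide_diff_of_int_notin_Rats) (auto simp: lehner_first_digit_def)
  ultimately show ?thesis by blast
qed

lemma lehner_orbit_range:
  assumes "1 < x" "x < 2" "x \<notin> \<rat>"
  shows "1 < lehner_orbit x n \<and> lehner_orbit x n < 2 \<and> lehner_orbit x n \<notin> \<rat>"
  by (induction n) (use assms lehner_map_range in \<open>auto simp: lehner_orbit_Suc\<close>)

lemma add_square_le_divide_mult:
  fixes p q :: real
  assumes "0 < p" "p \<le> 1" "0 < q" "q \<le> 1"
  shows "\<bar>p - q\<bar> + \<bar>p - q\<bar>^2 \<le> \<bar>p - q\<bar> / (p * q)"
proof -
  define d where "d = \<bar>p - q\<bar>"
  have "p * q \<le> p" "p * q \<le> q" using assms by (simp_all add: mult_left_le mult_left_le_one_le)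
  then have pq: "p * q \<le> 1 - d" using assms unfolding d_def by linarith
  have d0: "d \<ge> 0" by (simp add: d_def)
  have "(d + d^2) * (p * q) \<le> (d + d^2) * (1 - d)" using pq d0 by (intro mult_left_mono) auto
  also have "\<dots> \<le> d" using d0 by (simp add: algebra_simps power2_eq_square)
  finally show ?thesis using assms by (simp add: d_def field_simps)
qed

lemma lehner_map_dist_ge:
  assumes "1 < u" "u < 2" "1 < v" "v < 2" "(u < 3/2) = (v < 3/2)"
  shows "\<bar>u - v\<bar> + \<bar>u - v\<bar>^2 \<le> \<bar>lehner_map u - lehner_map v\<bar>"
proof (cases "u < 3/2")
  case True
  then have "lehner_map u - lehner_map v = (u - v) / ((2 - u) * (2 - v))"
    using assms by (simp add: lehner_map_def field_simps)
  then have "\<bar>lehner_map u - lehner_map v\<bar> = \<bar>(2 - u) - (2 - v)\<bar> / ((2 - u) * (2 - v))"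
    using assms by (simp add: abs_divide abs_mult abs_minus_commute)
  then show ?thesis
    using assms True add_square_le_divide_mult[of "2 - u" "2 - v"] by (simp add: power2_commute)
next
  case False
  then have "lehner_map u - lehner_map v = (v - u) / ((u - 1) * (v - 1))"
    using assms by (simp add: lehner_map_def field_simps)
  then have "\<bar>lehner_map u - lehner_map v\<bar> = \<bar>(u - 1) - (v - 1)\<bar> / ((u - 1) * (v - 1))"
    using assms by (simp add: abs_divide abs_mult abs_minus_commute)
  then show ?thesis
    using assms False add_square_le_divide_mult[of "u - 1" "v - 1"] by simp
qed

text \<open>Equal digits keep the two orbits on a common branch, so their distance \<open>\<delta>\<close> grows to
  at least \<open>\<delta> + n \<delta>\<^sup>2\<close> after \<open>n\<close> steps, while both orbits stay in \<open>(1, 2)\<close>.\<close>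

lemma lehner_digits_inj:
  assumes x: "1 < x" "x < 2" "x \<notin> \<rat>" and y: "1 < y" "y < 2" "y \<notin> \<rat>"
    and same: "\<And>i. lehner_digit x i = lehner_digit y i"
  shows "x = y"
proof (rule ccontr)
  assume "x \<noteq> y"
  define \<delta> where "\<delta> = \<bar>x - y\<bar>"
  have \<delta>: "\<delta> > 0" using \<open>x \<noteq> y\<close> by (simp add: \<delta>_def)
  have grow: "\<delta> + of_nat n * \<delta>^2 \<le> \<bar>lehner_orbit x n - lehner_orbit y n\<bar>" for n
  proof (induction n)
    case 0
    then show ?case by (simp add: \<delta>_def)
  next
    case (Suc n)
    define e where "e = \<bar>lehner_orbit x n - lehner_orbit y n\<bar>"
    have "(lehner_orbit x n < 3/2) = (lehner_orbit y n < 3/2)"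
      using same[of n] by (auto simp: lehner_digit_eq lehner_first_digit_def split: if_splits)
    then have "e + e^2 \<le> \<bar>lehner_orbit x (Suc n) - lehner_orbit y (Suc n)\<bar>"
      unfolding lehner_orbit_Suc e_def
      using lehner_orbit_range[OF x] lehner_orbit_range[OF y] by (intro lehner_map_dist_ge) auto
    moreover have "\<delta>^2 \<le> e^2"
      using Suc.IH \<delta> by (intro power_mono) (auto simp: e_def intro: order_trans[rotated])
    ultimately show ?case using Suc.IH by (simp add: e_def algebra_simps)
  qed
  obtain n :: nat where "1 / \<delta>^2 < of_nat n" using reals_Archimedean2 by blast
  then have "1 < of_nat n * \<delta>^2" using \<delta> by (simp add: field_simps)
  moreover have "\<bar>lehner_orbit x n - lehner_orbit y n\<bar> < 1"
    using lehner_orbit_range[OF x, of n] lehner_orbit_range[OF y, of n] by (simp add: abs_less_iff)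
  ultimately show False using grow[of n] \<delta> by linarith
qed

lemma lehner_orbit_period:
  assumes "1 < x" "x < 2" "x \<notin> \<rat>" "\<And>i. lehner_digit x (i + r) = lehner_digit x i"
  shows "lehner_orbit x r = x"
  using assms lehner_orbit_range[OF assms(1-3)]
  by (intro lehner_digits_inj) (auto simp: lehner_digit_orbit)

lemma lehner_orbit_mod:
  assumes "lehner_orbit x r = x"
  shows "lehner_orbit x n = lehner_orbit x (n mod r)"
proof -
  have "lehner_orbit x (q * r) = x" for q
    by (induction q) (simp_all add: lehner_orbit_add assms)
  then show ?thesis
    by (metis div_mult_mod_eq lehner_orbit_add)
qed

lemma lehner_digit_1_1_in_period:
  assumes x: "1 < x" "x < 2" "x \<notin> \<rat>" and "r > 0" "lehner_orbit x r = x"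
  shows "\<exists>j<r. lehner_digit x j = (1, 1)"
proof (rule ccontr)
  assume "\<not> ?thesis"
  then have left: "lehner_orbit x j < 3/2" if "j < r" for j
    using that by (auto simp: lehner_digit_eq lehner_first_digit_def split: if_splits)
  have incr: "lehner_orbit x j < lehner_orbit x (Suc j)" if "j < r" for j
  proof -
    define u where "u = lehner_orbit x j"
    have "1 < u" "u < 3/2" using lehner_orbit_range[OF x] left[OF that] by (auto simp: u_def)
    moreover have "u * (2 - u) = 1 - (u - 1)^2" by (simp add: algebra_simps power2_eq_square)
    ultimately have "u * (2 - u) < 1" by simp
    then show ?thesis using \<open>u < 3/2\<close> by (simp add: lehner_orbit_Suc u_def lehner_map_def field_simps)
  qed
  have below: "x \<le> lehner_orbit x j" if "j \<le> r" for j
    using that by (induction j) (auto intro: order_trans[OF _ less_imp_le[OF incr]])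
  obtain m where m: "r = Suc m" using \<open>r > 0\<close> by (cases r) auto
  then have "x < lehner_orbit x r" using below[of m] incr[of m] by simp
  then show False using assms(5) by simp
qed

text \<open>Reading \<open>n\<close> Lehner digits forward is the Moebius action of the transposed
  (hence index-swapped) product of the reversed Farey digit matrices.\<close>

lemma lehner_orbit_mobius:
  assumes x: "1 < x" "x < 2" "x \<notin> \<rat>"
    and "farey_matrix (rev (map (lehner_farey_digit x) [i..<i + n])) = (A, B, C, D)"
  shows "lehner_orbit x i
    = (of_int D * lehner_orbit x (i + n) + of_int B) / (of_int C * lehner_orbit x (i + n) + of_int A)"
  using assms(4)
proof (induction n arbitrary: i A B C D)
  case 0
  then show ?case by simp
next
  case (Suc n)
  obtain A0 B0 C0 D0
    where M0: "farey_matrix (rev (map (lehner_farey_digit x) [Suc i..<Suc i + n])) = (A0, B0, C0, D0)"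
    by (cases "farey_matrix (rev (map (lehner_farey_digit x) [Suc i..<Suc i + n]))") auto
  have "[i..<i + Suc n] = i # [Suc i..<Suc i + n]" by (simp add: upt_conv_Cons)
  then have "(A, B, C, D) = mobius_mult_digit (A0, B0, C0, D0) (lehner_farey_digit x i)"
    using Suc.prems M0 by simp
  then have new: "A = B0" "C = D0"
    "B = A0 * fst (lehner_farey_digit x i) + B0 * snd (lehner_farey_digit x i)"
    "D = C0 * fst (lehner_farey_digit x i) + D0 * snd (lehner_farey_digit x i)"
    by (simp_all add: mobius_mult_digit_def)
  have "farey_matrix_bounds (A0, B0, C0, D0)"
    using farey_matrix_bounds[of "rev (map (lehner_farey_digit x) [Suc i..<Suc i + n])"] M0
    by (auto simp: is_farey_digit_lehner)
  then have C0: "0 \<le> C0" "1 \<le> C0 + A0" by (auto simp: farey_matrix_bounds_def)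
  define z where "z = lehner_orbit x (i + Suc n)"
  have "z > 1" using lehner_orbit_range[OF x] by (simp add: z_def)
  then have den: "of_int C0 * z + of_int A0 \<ge> 1"
    using C0 mult_left_mono[of 1 z "of_int C0"] by linarith
  have IH: "lehner_orbit x (Suc i) = (of_int D0 * z + of_int B0) / (of_int C0 * z + of_int A0)"
    using Suc.IH[OF M0] by (simp add: z_def)
  have "lehner_orbit x (Suc i) > 1" using lehner_orbit_range[OF x] by simp
  then have num: "of_int D0 * z + of_int B0 > 0"
    using IH den by (simp add: field_simps)
  have "lehner_orbit x i = of_int (fst (lehner_digit x i)) + of_int (snd (lehner_digit x i)) / lehner_orbit x (Suc i)"
    using lehner_map_inverse lehner_orbit_range[OF x, of i]
    by (simp add: lehner_orbit_Suc lehner_digit_eq)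
  also have "\<dots> = (of_int D * z + of_int B) / (of_int C * z + of_int A)"
    using den num by (simp add: IH new lehner_farey_digit_def field_simps)
  finally show ?case by (simp add: z_def)
qed

section \<open>Galois conjugates\<close>

definition has_discriminant :: "real \<Rightarrow> int \<Rightarrow> bool" where
  "has_discriminant x \<Delta> \<longleftrightarrow> (\<exists>a b c :: int. a \<noteq> 0 \<and>
     of_int a * x^2 + of_int b * x + of_int c = 0 \<and> b^2 - 4 * a * c = \<Delta>)"

lemma quadratic_irrational_iff_discriminant:
  "quadratic_irrational x \<longleftrightarrow> x \<notin> \<rat> \<and> (\<exists>\<Delta>. has_discriminant x \<Delta>)"
  by (auto simp: quadratic_irrational_def has_discriminant_def)

text \<open>Irrationality of the root makes its integer quadratic unique up to a scalar,
  so that the description in \<open>galois_conj\<close> is determined.\<close>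

lemma galois_conj_eq:
  fixes a b c :: int
  assumes x: "x \<notin> \<rat>" and "a \<noteq> 0" "of_int a * x^2 + of_int b * x + of_int c = 0"
  shows "galois_conj x = - of_int b / of_int a - x"
  unfolding galois_conj_def
proof (rule the_equality)
  fix y
  assume "\<exists>a' b' c' :: int. a' \<noteq> 0 \<and> of_int a' * x^2 + of_int b' * x + of_int c' = 0 \<and>
      y = - of_int b' / of_int a' - x"
  then obtain a' b' c' :: int where a': "a' \<noteq> 0"
    and root': "of_int a' * x^2 + of_int b' * x + of_int c' = 0" and y: "y = - of_int b' / of_int a' - x"
    by blast
  have lin: "of_int (a' * b - a * b') * x + of_int (a' * c - a * c') = (0::real)"
  proof -
    have "of_int (a' * b - a * b') * x + of_int (a' * c - a * c') =
        of_int a' * (of_int a * x^2 + of_int b * x + of_int c)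
      - of_int a * (of_int a' * x^2 + of_int b' * x + of_int c')"
      by (simp add: algebra_simps power2_eq_square)
    then show ?thesis using assms(3) root' by simp
  qed
  have "a' * b - a * b' = 0"
  proof (rule ccontr)
    assume "a' * b - a * b' \<noteq> 0"
    define k where "k = (of_int (a' * b - a * b') :: real)"
    define m where "m = (of_int (a' * c - a * c') :: real)"
    have "k \<noteq> 0" unfolding k_def using \<open>a' * b - a * b' \<noteq> 0\<close> by (metis of_int_eq_0_iff)
    moreover have "k * x + m = 0" using lin by (simp add: k_def m_def)
    ultimately have "x = - m / k" by (simp add: field_simps)
    then show False using x by (simp add: k_def m_def del: of_int_diff of_int_mult)
  qed
  then have "of_int b' / of_int a' = (of_int b / of_int a :: real)"
    using a' assms(2) by (simp add: field_simps flip: of_int_mult)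
  then show "y = - of_int b / of_int a - x" using y by simp
qed (use assms in blast)

lemma galois_conj_vieta:
  fixes a b c :: int
  assumes "x \<notin> \<rat>" "a \<noteq> 0" "of_int a * x^2 + of_int b * x + of_int c = 0"
  shows "of_int b = - of_int a * (x + galois_conj x)" "of_int c = of_int a * x * galois_conj x"
proof -
  have z: "galois_conj x = - of_int b / of_int a - x" by (rule galois_conj_eq[OF assms])
  show "of_int b = - of_int a * (x + galois_conj x)" using assms(2) by (simp add: z field_simps)
  have "of_int a * x * galois_conj x = - of_int b * x - of_int a * x^2"
    using assms(2) by (simp add: z field_simps power2_eq_square)
  then show "of_int c = of_int a * x * galois_conj x" using assms(3) by (simp add: algebra_simps)
qed

lemma galois_conj_notin_Rats:
  assumes "x \<notin> \<rat>" "has_discriminant x \<Delta>"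
  shows "galois_conj x \<notin> \<rat>"
proof
  obtain a b c :: int where abc: "a \<noteq> 0" "of_int a * x^2 + of_int b * x + of_int c = 0"
    using assms(2) by (auto simp: has_discriminant_def)
  assume "galois_conj x \<in> \<rat>"
  then have "- of_int b / of_int a - galois_conj x \<in> \<rat>" by simp
  then show False using assms(1) by (simp add: galois_conj_eq[OF assms(1) abc])
qed

lemma galois_conj_divide_diff:
  fixes e p :: int
  assumes x: "x \<notin> \<rat>" and disc: "has_discriminant x \<Delta>" and e: "e \<noteq> 0"
  defines "y \<equiv> of_int e / (x - of_int p)"
  shows "has_discriminant y (e^2 * \<Delta>)"
    and "galois_conj y = of_int e / (galois_conj x - of_int p)"
proof -
  obtain a b c :: int where a: "a \<noteq> 0" and root: "of_int a * x^2 + of_int b * x + of_int c = 0"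
    and \<Delta>: "b^2 - 4 * a * c = \<Delta>"
    using disc by (auto simp: has_discriminant_def)
  define z where "z = galois_conj x"
  define a1 where "a1 = a * p^2 + b * p + c"
  define b1 where "b1 = e * (2 * a * p + b)"
  define c1 where "c1 = a * e^2"
  have yq: "y \<notin> \<rat>" unfolding y_def using x e by (rule divide_diff_of_int_notin_Rats)
  have zq: "z \<notin> \<rat>" unfolding z_def using x disc by (rule galois_conj_notin_Rats)
  have b: "of_int b = - of_int a * (x + z)" and c: "of_int c = of_int a * x * z"
    using galois_conj_vieta[OF x a root] by (simp_all add: z_def)
  define u where "u = of_int p - x"
  define v where "v = of_int p - z"
  have u: "u \<noteq> 0" using x by (auto simp: u_def)
  have v: "v \<noteq> 0" using zq by (auto simp: v_def)
  have yu: "y = - of_int e / u" by (simp add: y_def u_def minus_divide_right)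
  have a1: "(of_int a1 :: real) = of_int a * u * v"
    by (simp add: a1_def b c u_def v_def algebra_simps power2_eq_square)
  have b1: "(of_int b1 :: real) = of_int e * of_int a * (u + v)"
    by (simp add: b1_def b u_def v_def algebra_simps)
  have a1_nz: "a1 \<noteq> 0"
  proof
    assume "a1 = 0"
    then show False using a1 a u v by simp
  qed
  have root_y: "of_int a1 * y^2 + of_int b1 * y + of_int c1 = 0"
    using e u v by (simp add: a1 b1 c1_def yu field_simps power2_eq_square)
  have "b1^2 - 4 * a1 * c1 = e^2 * \<Delta>"
    by (simp add: a1_def b1_def c1_def power2_eq_square algebra_simps flip: \<Delta>)
  then show "has_discriminant y (e^2 * \<Delta>)"
    using a1_nz root_y unfolding has_discriminant_def by blast
  have "galois_conj y = - of_int b1 / of_int a1 - y" by (rule galois_conj_eq[OF yq a1_nz root_y])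
  also have "\<dots> = - of_int e / v" using a u v by (simp add: a1 b1 yu field_simps)
  finally show "galois_conj y = of_int e / (galois_conj x - of_int p)"
    by (simp add: v_def z_def minus_divide_right)
qed

lemma lehner_map_discriminant:
  assumes "x \<notin> \<rat>" "has_discriminant x \<Delta>"
  shows "has_discriminant (lehner_map x) \<Delta>"
    and "galois_conj (lehner_map x)
      = of_int (snd (lehner_first_digit x)) / (galois_conj x - of_int (fst (lehner_first_digit x)))"
proof -
  have e: "snd (lehner_first_digit x) \<noteq> 0" "(snd (lehner_first_digit x))^2 = 1"
    by (auto simp: lehner_first_digit_def)
  show "has_discriminant (lehner_map x) \<Delta>"
    using galois_conj_divide_diff(1)[OF assms e(1)] e(2) by (simp add: lehner_map_eq)
  show "galois_conj (lehner_map x)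
      = of_int (snd (lehner_first_digit x)) / (galois_conj x - of_int (fst (lehner_first_digit x)))"
    using galois_conj_divide_diff(2)[OF assms e(1)] by (simp add: lehner_map_eq)
qed

section \<open>Reduced quadratic irrationals\<close>

definition lehner_reduced :: "real \<Rightarrow> bool" where
  "lehner_reduced x \<longleftrightarrow> 1 < x \<and> x < 2 \<and> quadratic_irrational x \<and> galois_conj x < 1"

lemma galois_conj_lehner_map_sign:
  assumes "lehner_reduced x"
  shows "x < 3/2 \<Longrightarrow> 0 < galois_conj (lehner_map x) \<and> galois_conj (lehner_map x) < 1"
    and "\<not> x < 3/2 \<Longrightarrow> galois_conj (lehner_map x) < 0"
proof -
  obtain \<Delta> where x: "x \<notin> \<rat>" "has_discriminant x \<Delta>" and "galois_conj x < 1"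
    using assms by (auto simp: lehner_reduced_def quadratic_irrational_iff_discriminant)
  moreover have "- 1 / (t - 2) = 1 / (2 - t)" for t :: real
    by (cases "t = 2") (simp_all add: field_simps)
  ultimately have "galois_conj (lehner_map x)
      = (if x < 3/2 then 1 / (2 - galois_conj x) else 1 / (galois_conj x - 1))"
    using lehner_map_discriminant(2)[OF x] by (simp add: lehner_first_digit_def)
  then show "x < 3/2 \<Longrightarrow> 0 < galois_conj (lehner_map x) \<and> galois_conj (lehner_map x) < 1"
    and "\<not> x < 3/2 \<Longrightarrow> galois_conj (lehner_map x) < 0"
    using \<open>galois_conj x < 1\<close> by (simp_all add: divide_less_eq_1 divide_less_0_iff)
qed

lemma lehner_map_reduced:
  assumes "lehner_reduced x"
  shows "lehner_reduced (lehner_map x)"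
proof -
  obtain \<Delta> where x: "x \<notin> \<rat>" "has_discriminant x \<Delta>"
    using assms by (auto simp: lehner_reduced_def quadratic_irrational_iff_discriminant)
  have "1 < lehner_map x \<and> lehner_map x < 2 \<and> lehner_map x \<notin> \<rat>"
    using assms by (intro lehner_map_range) (auto simp: lehner_reduced_def quadratic_irrational_def)
  moreover have "galois_conj (lehner_map x) < 1"
    using galois_conj_lehner_map_sign[OF assms] by (cases "x < 3/2") auto
  ultimately show ?thesis
    using lehner_map_discriminant(1)[OF x]
    by (auto simp: lehner_reduced_def quadratic_irrational_iff_discriminant)
qed

lemma lehner_orbit_reduced: "lehner_reduced x \<Longrightarrow> lehner_reduced (lehner_orbit x n)"
  by (induction n) (simp_all add: lehner_orbit_Suc lehner_map_reduced)

text \<open>Both branches of the Lehner map cover \<open>(1, 2)\<close>, but the sign of the conjugate of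
  the image tells the branch apart.\<close>

lemma inj_on_lehner_map_reduced: "inj_on lehner_map {x. lehner_reduced x}"
proof (rule inj_onI, simp)
  fix x y
  assume x: "lehner_reduced x" and y: "lehner_reduced y" and eq: "lehner_map x = lehner_map y"
  have "(x < 3/2) = (y < 3/2)"
    using galois_conj_lehner_map_sign[OF x] galois_conj_lehner_map_sign[OF y] eq
    by (cases "x < 3/2"; cases "y < 3/2") auto
  then show "x = y"
    using x y eq by (cases "x < 3/2") (auto simp: lehner_reduced_def lehner_map_def field_simps)
qed

lemma abs_le_power2_int: "\<bar>n :: int\<bar> \<le> n^2"
proof (cases "n = 0")
  case False
  then have "\<bar>n\<bar> * 1 \<le> \<bar>n\<bar> * \<bar>n\<bar>" by (intro mult_left_mono) auto
  then show ?thesis by (simp add: power2_eq_square abs_mult[symmetric])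
qed simp

text \<open>With \<open>u = x - 1\<close> and \<open>w = 1 - x'\<close> both positive, the integer \<open>P = a + b + c = -a u w\<close>
  is nonzero while \<open>\<Delta> = a\<^sup>2 (u + w)\<^sup>2 \<ge> 4 \<bar>a\<bar> \<bar>P\<bar>\<close>.\<close>

lemma lehner_reduced_coeffs_bounded:
  fixes a b c :: int
  assumes red: "lehner_reduced x" and a: "a \<noteq> 0"
    and root: "of_int a * x^2 + of_int b * x + of_int c = 0"
  defines "\<Delta> \<equiv> b^2 - 4 * a * c"
  shows "\<bar>a\<bar> \<le> 6 * \<Delta> \<and> \<bar>b\<bar> \<le> 6 * \<Delta> \<and> \<bar>c\<bar> \<le> 6 * \<Delta>"
proof -
  have x: "1 < x" "x \<notin> \<rat>" "galois_conj x < 1"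
    using red by (auto simp: lehner_reduced_def quadratic_irrational_def)
  define z where "z = galois_conj x"
  have b: "of_int b = - of_int a * (x + z)" and c: "of_int c = of_int a * x * z"
    using galois_conj_vieta[OF x(2) a root] by (simp_all add: z_def)
  define u where "u = x - 1"
  define w where "w = 1 - z"
  have u: "u > 0" and w: "w > 0" using x by (simp_all add: u_def w_def z_def)
  define P where "P = a + b + c"
  have P: "(of_int P :: real) = - of_int a * u * w"
    by (simp add: P_def b c u_def w_def algebra_simps)
  have \<Delta>: "(of_int \<Delta> :: real) = (of_int a)^2 * (u + w)^2"
    by (simp add: \<Delta>_def b c u_def w_def algebra_simps power2_eq_square)
  have "P \<noteq> 0"
  proof
    assume "P = 0"
    then show False using P a u w by simp
  qed
  have key: "4 * \<bar>a\<bar> * \<bar>P\<bar> \<le> \<Delta>"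
  proof -
    have "(of_int (4 * \<bar>a\<bar> * \<bar>P\<bar>) :: real) = (of_int a)^2 * (4 * (u * w))"
      using u w by (simp add: P abs_mult power2_eq_square)
    also have "\<dots> \<le> (of_int a)^2 * (u + w)^2"
      using sum_squares_ge_zero[of "u - w" 0]
      by (intro mult_left_mono) (auto simp: algebra_simps power2_eq_square)
    also have "\<dots> = of_int \<Delta>" by (rule \<Delta>[symmetric])
    finally show ?thesis by linarith
  qed
  have "\<bar>a\<bar> \<le> \<bar>a\<bar> * \<bar>P\<bar>" "\<bar>P\<bar> \<le> \<bar>a\<bar> * \<bar>P\<bar>"
    using \<open>P \<noteq> 0\<close> a by (simp_all add: mult_le_cancel_left1 mult_le_cancel_right1)
  then have aD: "\<bar>a\<bar> \<le> \<Delta>" and PD: "\<bar>P\<bar> \<le> \<Delta>" using key by simp_all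
  have "(b + 2 * a)^2 = \<Delta> + 4 * a * P"
    by (simp add: \<Delta>_def P_def algebra_simps power2_eq_square)
  moreover have "4 * a * P \<le> 4 * \<bar>a\<bar> * \<bar>P\<bar>" by (simp add: abs_mult[symmetric] mult.assoc)
  ultimately have "\<bar>b + 2 * a\<bar> \<le> 2 * \<Delta>"
    using key abs_le_power2_int[of "b + 2 * a"] by simp
  then have bD: "\<bar>b\<bar> \<le> 4 * \<Delta>" using aD by simp
  have cD: "\<bar>c\<bar> \<le> 6 * \<Delta>" using bD aD PD by (simp add: P_def)
  show ?thesis using aD bD cD abs_ge_zero[of a] by linarith
qed

lemma finite_lehner_reduced_discriminant: "finite {x. lehner_reduced x \<and> has_discriminant x \<Delta>}"
proof -
  define M where "M = 6 * \<Delta>"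
  define roots where "roots p = {x :: real. fst p \<noteq> 0 \<and>
      of_int (fst p) * x^2 + of_int (fst (snd p)) * x + of_int (snd (snd p)) = 0}"
    for p :: "int \<times> int \<times> int"
  have "finite (roots p)" for p
  proof (cases "fst p = 0")
    case False
    define a b c where "a = (of_int (fst p) :: real)" "b = (of_int (fst (snd p)) :: real)"
      "c = (of_int (snd (snd p)) :: real)"
    have "a \<noteq> 0" using False by (simp add: a_b_c_def)
    then have "roots p \<subseteq> {(-b + sqrt (discrim a b c)) / (2 * a), (-b - sqrt (discrim a b c)) / (2 * a)}"
      unfolding roots_def using discriminant_iff by (auto simp: a_b_c_def)
    then show ?thesis by (rule finite_subset) simp
  qed (simp add: roots_def)
  moreover have "{x. lehner_reduced x \<and> has_discriminant x \<Delta>}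
      \<subseteq> (\<Union>p\<in>{-M..M} \<times> {-M..M} \<times> {-M..M}. roots p)"
  proof safe
    fix x
    assume "lehner_reduced x" "has_discriminant x \<Delta>"
    then obtain a b c :: int where "a \<noteq> 0" "of_int a * x^2 + of_int b * x + of_int c = 0"
      "b^2 - 4 * a * c = \<Delta>" "lehner_reduced x"
      by (auto simp: has_discriminant_def)
    moreover from this have "\<bar>a\<bar> \<le> M \<and> \<bar>b\<bar> \<le> M \<and> \<bar>c\<bar> \<le> M"
      using lehner_reduced_coeffs_bounded by (auto simp: M_def)
    ultimately show "x \<in> (\<Union>p\<in>{-M..M} \<times> {-M..M} \<times> {-M..M}. roots p)"
      by (intro UN_I[of "(a, b, c)"]) (auto simp: roots_def abs_le_iff)
  qed
  ultimately show ?thesis by (auto intro: finite_subset)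
qed

lemma lehner_reduced_imp_purely_periodic:
  assumes "lehner_reduced x"
  shows "lehner_purely_periodic x"
proof -
  obtain \<Delta> where "has_discriminant x \<Delta>"
    using assms by (auto simp: lehner_reduced_def quadratic_irrational_iff_discriminant)
  then have orbit: "lehner_reduced (lehner_orbit x n) \<and> has_discriminant (lehner_orbit x n) \<Delta>" for n
  proof (induction n)
    case (Suc n)
    then show ?case
      using lehner_map_discriminant(1)[of "lehner_orbit x n" \<Delta>] lehner_map_reduced
      by (auto simp: lehner_orbit_Suc lehner_reduced_def quadratic_irrational_def)
  qed (use assms in simp)
  then have "range (lehner_orbit x) \<subseteq> {x. lehner_reduced x \<and> has_discriminant x \<Delta>}" by auto
  then have "finite (range (lehner_orbit x))"
    using finite_lehner_reduced_discriminant by (rule finite_subset)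
  then have "\<not> inj (lehner_orbit x)" using finite_imageD infinite_UNIV_nat by blast
  then obtain m n where "m \<noteq> n" "lehner_orbit x m = lehner_orbit x n" by (auto simp: inj_def)
  then obtain k p where "p > 0" and kp: "lehner_orbit x (k + p) = lehner_orbit x k"
  proof (cases "m < n")
    case True
    then show ?thesis using that[of "n - m" m] \<open>lehner_orbit x m = lehner_orbit x n\<close> by simp
  next
    case False
    then show ?thesis using that[of "m - n" n] \<open>m \<noteq> n\<close> \<open>lehner_orbit x m = lehner_orbit x n\<close> by simp
  qed
  have "lehner_orbit x (k + p) = lehner_orbit x k \<Longrightarrow> lehner_orbit x p = x" for k
  proof (induction k)
    case (Suc k)
    then show ?case
      using inj_onD[OF inj_on_lehner_map_reduced, of "lehner_orbit x (k + p)" "lehner_orbit x k"] orbit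
      by (simp add: lehner_orbit_Suc)
  qed simp
  then have "lehner_orbit x p = x" using kp .
  then have "\<forall>i. lehner_digit x (i + p) = lehner_digit x i"
    using lehner_digit_orbit[of x p] by simp
  then show ?thesis using \<open>p > 0\<close> by (auto simp: lehner_purely_periodic_def)
qed

section \<open>Purely periodic expansions\<close>

text \<open>The two fixed points \<open>x\<close> and \<open>x'\<close> of the Moebius map satisfy
  \<open>(C x + A) (C x' + A) = A D - B C = \<plusminus>1\<close>; as \<open>C x + A > 1\<close> this forces \<open>\<bar>C x' + A\<bar> < 1 \<le> C + A\<close>.\<close>

lemma mobius_fixed_point_reduced:
  fixes A B C D :: int
  assumes bounds: "farey_matrix_bounds (A, B, C, D)" and C: "C \<ge> 1"
    and x: "1 < x" "x \<notin> \<rat>"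
    and fixed: "x = (of_int D * x + of_int B) / (of_int C * x + of_int A)"
  shows "quadratic_irrational x \<and> galois_conj x < 1"
proof -
  have A: "1 \<le> C + A" and det: "\<bar>A * D - B * C\<bar> = 1"
    using bounds by (auto simp: farey_matrix_bounds_def)
  have "of_int C * x > of_int C * (1::real)" using C x by (intro mult_strict_left_mono) auto
  then have den: "of_int C * x + of_int A > (1::real)" using A by linarith
  have root: "of_int C * x^2 + of_int (A - D) * x + of_int (- B) = 0"
  proof -
    have "x * (of_int C * x + of_int A) = of_int D * x + of_int B"
      using fixed den by (simp add: field_simps)
    then show ?thesis by (simp add: algebra_simps power2_eq_square)
  qed
  have "C \<noteq> 0" using C by simp
  then have qi: "quadratic_irrational x" unfolding quadratic_irrational_def using x(2) root by blast
  define x' where "x' = galois_conj x"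
  have "of_int (A - D) = - of_int C * (x + x')" and "of_int (- B) = of_int C * x * x'"
    using galois_conj_vieta[OF x(2) \<open>C \<noteq> 0\<close> root] by (simp_all add: x'_def)
  then have sum: "of_int C * (x + x') = of_int D - of_int A" and prod: "of_int C * x * x' = - of_int B"
    by simp_all
  have "(of_int C * x + of_int A) * (of_int C * x' + of_int A)
      = of_int C * (of_int C * x * x') + of_int A * (of_int C * (x + x')) + (of_int A)^2"
    by (simp add: algebra_simps power2_eq_square)
  also have "\<dots> = of_int (A * D - B * C)"
    unfolding sum prod by (simp add: algebra_simps power2_eq_square)
  finally have fixed_points: "(of_int C * x + of_int A) * (of_int C * x' + of_int A) = of_int (A * D - B * C)" .
  have "(of_int C * x + of_int A) * \<bar>of_int C * x' + of_int A\<bar>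
      = \<bar>(of_int C * x + of_int A) * (of_int C * x' + of_int A)\<bar>"
    using den by (simp add: abs_mult)
  also have "\<dots> = (1::real)" unfolding fixed_points using det by (metis of_int_abs of_int_1)
  finally have "\<bar>of_int C * x' + of_int A\<bar> = 1 / (of_int C * x + of_int A)"
    using den by (simp add: field_simps)
  also have "\<dots> < 1" using den by simp
  finally have "of_int C * x' < of_int C * (1::real)" using A by linarith
  then have "x' < 1" using C by simp
  then show ?thesis using qi by (simp add: x'_def)
qed

lemma lehner_orbit_return_imp_reduced:
  assumes x: "1 < x" "x < 2" "x \<notin> \<rat>" and "r > 0" "lehner_orbit x r = x"
  shows "lehner_reduced x"
proof -
  let ?ds = "rev (map (lehner_farey_digit x) [0..<r])"
  obtain A B C D where M: "farey_matrix ?ds = (A, B, C, D)" by (cases "farey_matrix ?ds") auto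
  have "farey_matrix_bounds (A, B, C, D)"
    using farey_matrix_bounds[of ?ds] M by (simp add: is_farey_digit_lehner)
  moreover have "C \<ge> 1"
    using farey_matrix_C_pos[OF _ _ M] \<open>r > 0\<close> by (simp add: is_farey_digit_lehner)
  moreover have "x = (of_int D * x + of_int B) / (of_int C * x + of_int A)"
    using lehner_orbit_mobius[OF x, of 0 r] M \<open>lehner_orbit x r = x\<close> by simp
  ultimately show ?thesis
    using mobius_fixed_point_reduced x by (simp add: lehner_reduced_def)
qed

lemma galois_conj_lehner_orbit_Suc:
  assumes "lehner_reduced x"
  shows "- galois_conj (lehner_orbit x (Suc j))
    = farey_map (lehner_farey_digit x j) (- galois_conj (lehner_orbit x j))"
proof -
  obtain \<Delta> where "lehner_orbit x j \<notin> \<rat>" "has_discriminant (lehner_orbit x j) \<Delta>"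
    using lehner_orbit_reduced[OF assms, of j]
    by (auto simp: lehner_reduced_def quadratic_irrational_iff_discriminant)
  from lehner_map_discriminant(2)[OF this] show ?thesis
    by (simp add: lehner_orbit_Suc farey_map_def lehner_farey_digit_def lehner_digit_eq
        minus_divide_right)
qed

lemma farey_comp_backward:
  assumes "\<And>j. c (Suc j) = farey_map (e j) (c j)" "n \<le> m"
  shows "c m = farey_comp (map (\<lambda>i. e (m - Suc i)) [0..<n]) (c (m - n))"
  using assms(2)
proof (induction n)
  case (Suc n)
  have "Suc (m - Suc n) = m - n" using Suc.prems by simp
  then have "c (m - n) = farey_map (e (m - Suc n)) (c (m - Suc n))" using assms(1) by metis
  then show ?case using Suc by (simp add: farey_comp_append)
qed simp

lemma mult_diff_Suc_mod:
  fixes i k r :: nat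
  assumes "i < k * r"
  shows "(k * r - Suc i) mod r = r - Suc (i mod r)"
proof -
  have r: "r > 0" using assms by (cases r) auto
  define q s where "q = i div r" and "s = i mod r"
  have i: "i = q * r + s" and s: "s < r" using r by (simp_all add: q_def s_def)
  have "q < k" using assms by (simp add: q_def div_less_iff_less_mult r)
  then obtain l where k: "k = Suc (q + l)" by (auto simp: less_iff_Suc_add)
  have "k * r - Suc i = l * r + (r - Suc s)" using s by (simp add: i k algebra_simps)
  then have "(k * r - Suc i) mod r = (r - Suc s) mod r" by (simp only: mod_mult_self3)
  then show ?thesis using s by (simp add: s_def)
qed

lemma lehner_reversed_digit_1_1_frequently:
  assumes x: "1 < x" "x < 2" "x \<notin> \<rat>" and r: "r > 0" and period: "lehner_orbit x r = x"
  shows "frequently (\<lambda>i. lehner_farey_digit x (r - 1 - i mod r) = (1, 1)) sequentially"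
proof -
  obtain j where j: "j < r" "lehner_digit x j = (1, 1)"
    using lehner_digit_1_1_in_period[OF x r period] by blast
  have "(N * r + (r - 1 - j)) mod r = r - 1 - j" for N
    using j by (simp only: mod_mult_self3) simp
  then have "lehner_farey_digit x (r - 1 - (N * r + (r - 1 - j)) mod r) = (1, 1)" for N
    using j by (simp add: lehner_farey_digit_def)
  moreover have "N \<le> N * r + (r - 1 - j)" for N
    using r by (simp add: trans_le_add1)
  ultimately show ?thesis unfolding frequently_sequentially by blast
qed

text \<open>The negated conjugates \<open>c j = - x'\<^sub>j\<close> along the orbit satisfy
  \<open>c (j + 1) = farey_map (\<epsilon>\<^sub>j / a\<^sub>j) (c j)\<close> and are \<open>r\<close>-periodic, so \<open>c 0\<close> is
  the reversed digit string applied to a bounded tail.\<close>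

lemma lehner_reversed_period_value:
  assumes red: "lehner_reduced x" and r: "r > 0" and period: "lehner_orbit x r = x"
  shows "farey_cf_has_value (\<lambda>i. lehner_farey_digit x (r - 1 - i mod r)) (- galois_conj x)"
proof -
  have x: "1 < x" "x < 2" "x \<notin> \<rat>" using red by (auto simp: lehner_reduced_def quadratic_irrational_def)
  define c where "c j = - galois_conj (lehner_orbit x j)" for j
  define K where "K = (\<Sum>j<r. \<bar>c j\<bar> / min 1 (1 + c j))"
  have c_Suc: "c (Suc j) = farey_map (lehner_farey_digit x j) (c j)" for j
    unfolding c_def by (rule galois_conj_lehner_orbit_Suc[OF red])
  have c_gt: "c j > -1" for j
    using lehner_orbit_reduced[OF red, of j] by (simp add: c_def lehner_reduced_def)
  have c_mod: "c j = c (j mod r)" and digit_mod: "lehner_farey_digit x j = lehner_farey_digit x (j mod r)" for j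
    using lehner_orbit_mod[OF period, of j]
    by (simp_all add: c_def lehner_farey_digit_def lehner_digit_eq)
  show ?thesis
  proof (rule farey_cf_has_value_of_bounded_tails)
    show "is_farey_digit (lehner_farey_digit x (r - 1 - i mod r))" for i
      by (rule is_farey_digit_lehner)
    show "frequently (\<lambda>i. lehner_farey_digit x (r - 1 - i mod r) = (1, 1)) sequentially"
      using x r period by (rule lehner_reversed_digit_1_1_frequently)
    show "c (n * r - n) > -1" for n by (rule c_gt)
    show "\<bar>c (n * r - n)\<bar> / min 1 (1 + c (n * r - n)) \<le> K" for n
      unfolding K_def c_mod[of "n * r - n"]
    proof (intro member_le_sum)
      show "0 \<le> \<bar>c j\<bar> / min 1 (1 + c j)" for j using c_gt[of j] by simp
    qed (use r in simp_all)
    show "- galois_conj x = farey_comp (map (\<lambda>i. lehner_farey_digit x (r - 1 - i mod r)) [0..<n])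
        (c (n * r - n))" for n
    proof -
      have "- galois_conj x = c (n * r)" using c_mod[of "n * r"] by (simp add: c_def)
      also have "\<dots> = farey_comp (map (\<lambda>i. lehner_farey_digit x (n * r - Suc i)) [0..<n]) (c (n * r - n))"
        using r by (intro farey_comp_backward c_Suc) simp
      also have "map (\<lambda>i. lehner_farey_digit x (n * r - Suc i)) [0..<n]
          = map (\<lambda>i. lehner_farey_digit x (r - 1 - i mod r)) [0..<n]"
      proof (rule map_cong[OF refl])
        fix i assume "i \<in> set [0..<n]"
        then have "i < n * r" using r by (simp add: less_le_trans[of i n "n * r"])
        then show "lehner_farey_digit x (n * r - Suc i) = lehner_farey_digit x (r - 1 - i mod r)"
          using digit_mod[of "n * r - Suc i"] by (simp add: mult_diff_Suc_mod)
      qed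
      finally show ?thesis .
    qed
  qed
qed

theorem proposition6p2:
  fixes \<alpha> :: real
  assumes "1 < \<alpha>" "\<alpha> < 2" "\<alpha> \<notin> \<rat>"
  shows "(lehner_purely_periodic \<alpha> \<longleftrightarrow>
            quadratic_irrational \<alpha> \<and> galois_conj \<alpha> < 1)
       \<and> (\<forall>r::nat. r > 0 \<longrightarrow> (\<forall>i. lehner_digit \<alpha> (i + r) = lehner_digit \<alpha> i) \<longrightarrow>
            farey_cf_has_value
              (\<lambda>i. (snd (lehner_digit \<alpha> (r - 1 - i mod r)), fst (lehner_digit \<alpha> (r - 1 - i mod r))))
              (- galois_conj \<alpha>))"
proof -
  have period: "lehner_orbit \<alpha> r = \<alpha>" if "\<forall>i. lehner_digit \<alpha> (i + r) = lehner_digit \<alpha> i" for r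
    using lehner_orbit_period assms that by blast
  have "lehner_purely_periodic \<alpha> \<longleftrightarrow> lehner_reduced \<alpha>"
    using lehner_reduced_imp_purely_periodic lehner_orbit_return_imp_reduced[OF assms] period
    by (auto simp: lehner_purely_periodic_def)
  moreover have "farey_cf_has_value (\<lambda>i. lehner_farey_digit \<alpha> (r - 1 - i mod r)) (- galois_conj \<alpha>)"
    if "r > 0" "\<forall>i. lehner_digit \<alpha> (i + r) = lehner_digit \<alpha> i" for r
    using lehner_reversed_period_value lehner_orbit_return_imp_reduced[OF assms] period that by blast
  ultimately show ?thesis
    using assms by (simp add: lehner_reduced_def lehner_farey_digit_def)
qed

end
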